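(* Let $K$ be a nonarchimedean field of characteristic $p$ and $L/K$ a nonarchimedean field extension which is perfectly topologically finitely generated, i.e. $L$ has a dense subfield which is the perfection of a finitely generated field extension of $K$. Then $L/K$ factors as $K\subseteq K^{\mathrm{perfd}}_{r_1,\dots,r_l}\subseteq L$ for some polyradius $(r_1,\dots,r_l)$, with $L/K^{\mathrm{perfd}}_{r_1,\dots,r_l}$ semi-immediate.
   Context: $K^{\mathrm{perfd}}_{r_1,\dots,r_l}$ is the completion of $K(x_1^{1/p^\infty},\dots,x_l^{1/p^\infty})$ with respect to the canonical extension of the $(r_1,\dots,r_l)$-Gauss norm. An extension $F\subseteq E$ of valued fields is semi-immediate if $|E^\times|/|F^\times|$ is torsion and the residue field of $E$ is algebraic over that of $F$. *)

theory Defs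
  imports "HOL-Computational_Algebra.Primes" Complex_Main
begin

text \<open>A nonarchimedean field L is modelled as a type 'l of class field with a
real-valued nonarchimedean absolute value v; subfields of L (such as K) are sets.\<close>

definition nonarch_abs :: "('l::field \<Rightarrow> real) \<Rightarrow> bool" where
  "nonarch_abs v \<longleftrightarrow> (\<forall>x. 0 \<le> v x) \<and> (\<forall>x. v x = 0 \<longleftrightarrow> x = 0)
     \<and> (\<forall>x y. v (x * y) = v x * v y) \<and> (\<forall>x y. v (x + y) \<le> max (v x) (v y))"

definition is_subfield :: "'l::field set \<Rightarrow> bool" where
  "is_subfield S \<longleftrightarrow> 0 \<in> S \<and> 1 \<in> S \<and> (\<forall>x\<in>S. \<forall>y\<in>S. x + y \<in> S \<and> x * y \<in> S)
     \<and> (\<forall>x\<in>S. - x \<in> S \<and> inverse x \<in> S)"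

definition gen_subfield :: "'l::field set \<Rightarrow> 'l set" where
  "gen_subfield S = \<Inter> {M. is_subfield M \<and> S \<subseteq> M}"

definition v_cauchy :: "('l::field \<Rightarrow> real) \<Rightarrow> (nat \<Rightarrow> 'l) \<Rightarrow> bool" where
  "v_cauchy v f \<longleftrightarrow> (\<forall>e>0. \<exists>N. \<forall>m\<ge>N. \<forall>n\<ge>N. v (f m - f n) < e)"

definition v_complete :: "('l::field \<Rightarrow> real) \<Rightarrow> 'l set \<Rightarrow> bool" where
  "v_complete v S \<longleftrightarrow> (\<forall>f. (\<forall>n. f n \<in> S) \<and> v_cauchy v f \<longrightarrow>
       (\<exists>y\<in>S. (\<lambda>n. v (f n - y)) \<longlonglongrightarrow> 0))"

definition v_closure :: "('l::field \<Rightarrow> real) \<Rightarrow> 'l set \<Rightarrow> 'l set" where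
  "v_closure v S = {y. \<forall>e>0. \<exists>z\<in>S. v (y - z) < e}"

definition nonarch_field_in :: "('l::field \<Rightarrow> real) \<Rightarrow> 'l set \<Rightarrow> bool" where
  "nonarch_field_in v K \<longleftrightarrow> is_subfield K \<and> v_complete v K \<and> (\<exists>x\<in>K. v x \<noteq> 0 \<and> v x \<noteq> 1)"

text \<open>L (= UNIV) has a dense subfield which is the perfection of a finitely generated
 extension F = K(A) of K.\<close>
definition perf_top_fin_gen :: "nat \<Rightarrow> ('l::field \<Rightarrow> real) \<Rightarrow> 'l set \<Rightarrow> bool" where
  "perf_top_fin_gen p v K \<longleftrightarrow> (\<exists>A. finite A \<and>
     (let F = gen_subfield (K \<union> A); E = {y. \<exists>n. y ^ (p ^ n) \<in> F}
      in (\<forall>y\<in>E. \<exists>z\<in>E. z ^ p = y) \<and> v_closure v E = UNIV))"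

text \<open>Exponents in (Z[1/p]_{>=0})^l, as functions nat => rat vanishing from l on.\<close>
definition admissible_exp :: "nat \<Rightarrow> nat \<Rightarrow> (nat \<Rightarrow> rat) \<Rightarrow> bool" where
  "admissible_exp p l e \<longleftrightarrow> (\<forall>i. 0 \<le> e i) \<and> (\<forall>i\<ge>l. e i = 0)
     \<and> (\<forall>i. \<exists>k::nat. e i * of_nat p ^ k \<in> \<int>)"

definition root_pow :: "nat \<Rightarrow> (nat \<Rightarrow> 'l::field) \<Rightarrow> (nat \<Rightarrow> rat) \<Rightarrow> nat \<Rightarrow> 'l" where
  "root_pow p x e i = (THE y. \<exists>k n::nat. e i = of_nat n / of_nat p ^ k \<and> y ^ (p ^ k) = x i ^ n)"

definition mon :: "nat \<Rightarrow> nat \<Rightarrow> (nat \<Rightarrow> 'l::field) \<Rightarrow> (nat \<Rightarrow> rat) \<Rightarrow> 'l" where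
  "mon p l x e = (\<Prod>i<l. root_pow p x e i)"

definition has_p_roots :: "nat \<Rightarrow> nat \<Rightarrow> (nat \<Rightarrow> 'l::field) \<Rightarrow> bool" where
  "has_p_roots p l x \<longleftrightarrow> (\<forall>i<l. \<forall>k. \<exists>y. y ^ (p ^ k) = x i)"

definition gauss_norm_cond ::
  "nat \<Rightarrow> ('l::field \<Rightarrow> real) \<Rightarrow> 'l set \<Rightarrow> nat \<Rightarrow> (nat \<Rightarrow> real) \<Rightarrow> (nat \<Rightarrow> 'l) \<Rightarrow> bool" where
  "gauss_norm_cond p v K l r x \<longleftrightarrow>
     (\<forall>E c. finite E \<and> E \<noteq> {} \<and> (\<forall>e\<in>E. admissible_exp p l e) \<and> (\<forall>e\<in>E. c e \<in> K) \<longrightarrow>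
        v (\<Sum>e\<in>E. c e * mon p l x e) =
        Max ((\<lambda>e. v (c e) * (\<Prod>i<l. r i powr real_of_rat (e i))) ` E))"

text \<open>M is (the image of an isometric K-embedding of) K^perfd_{r_1,...,r_l} inside L:
 the closure in L of K(x_1^(1/p^oo),...,x_l^(1/p^oo)), where v restricts to the Gauss norm.\<close>
definition is_Kperfd ::
  "nat \<Rightarrow> ('l::field \<Rightarrow> real) \<Rightarrow> 'l set \<Rightarrow> nat \<Rightarrow> (nat \<Rightarrow> real) \<Rightarrow> 'l set \<Rightarrow> bool" where
  "is_Kperfd p v K l r M \<longleftrightarrow> (\<forall>i<l. 0 < r i) \<and>
     (\<exists>x. has_p_roots p l x \<and> gauss_norm_cond p v K l r x \<and>
        M = v_closure v (gen_subfield (K \<union> {mon p l x e | e. admissible_exp p l e})))"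

text \<open>L (= UNIV) is semi-immediate over M: value group quotient torsion and residue
 field extension algebraic (each residue class satisfies a monic polynomial over the
 residue field of M).\<close>
definition semi_immediate :: "('l::field \<Rightarrow> real) \<Rightarrow> 'l set \<Rightarrow> bool" where
  "semi_immediate v M \<longleftrightarrow>
     (\<forall>y. y \<noteq> 0 \<longrightarrow> (\<exists>n>0. \<exists>z\<in>M. z \<noteq> 0 \<and> v y ^ n = v z)) \<and>
     (\<forall>y. v y \<le> 1 \<longrightarrow> (\<exists>n>0. \<exists>a. (\<forall>j<n. a j \<in> M \<and> v (a j) \<le> 1) \<and>
                                   v (y ^ n + (\<Sum>j<n. a j * y ^ j)) < 1))"

end

theory Submission
  imports Defs "HOL-Algebra.Embedded_Algebras"
begin

text \<open>Choose x_1, ..., x_l in the dense field F = K(A), each with all p-power roots, such that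
  v is the r-Gauss norm on S = K(x_1^(1/p^oo), ..., x_l^(1/p^oo)), with l maximal. Such an l
  exists because l \<le> |A|: writing x_i = P_i / Q with polynomials in A, the monomials in the x_i
  of degree \<le> N are K-independent by the Gauss norm formula, while after clearing denominators
  they lie in a space spanned by far fewer monomials in A once l > |A|.
  Now if some y \<in> L had a value of infinite order modulo |S^*|, or a residue transcendental over
  the residue field of S, then so would f = z^(p^n) \<in> F for a close approximation z of y. In
  either case v is the Gauss norm of radius |f| on S[f], hence by Frobenius on S[f^(1/p^oo)], and
  x_(l+1) = f would extend the family. So L is semi-immediate over S and over its closure,
  which is K^perfd_r.\<close>

locale nonarch_valued =
  fixes v :: "'l::field \<Rightarrow> real"
  assumes nonarch_abs: "nonarch_abs v"
begin

lemma v_nonneg: "0 \<le> v x"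
  using nonarch_abs unfolding nonarch_abs_def by blast

lemma v_eq_0_iff [simp]: "v x = 0 \<longleftrightarrow> x = 0"
  using nonarch_abs unfolding nonarch_abs_def by blast

lemma v_0 [simp]: "v 0 = 0"
  by simp

lemma v_mult [simp]: "v (x * y) = v x * v y"
  using nonarch_abs unfolding nonarch_abs_def by blast

lemma v_add_le_max: "v (x + y) \<le> max (v x) (v y)"
  using nonarch_abs unfolding nonarch_abs_def by blast

lemma v_pos: "x \<noteq> 0 \<Longrightarrow> 0 < v x"
  using v_nonneg[of x] by (simp add: order_less_le)

lemma v_1 [simp]: "v 1 = 1"
proof -
  have "v 1 * v 1 = v 1 * 1"
    using v_mult[of 1 1] by simp
  then show ?thesis
    by (metis mult_left_cancel one_neq_zero v_eq_0_iff)
qed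

lemma v_power [simp]: "v (x ^ n) = v x ^ n"
  by (induction n) simp_all

lemma v_minus [simp]: "v (- x) = v x"
proof -
  have "v (-1) * v (-1) = 1"
    using v_mult[of "-1" "-1"] by simp
  then have "v (-1) = 1"
    using v_nonneg[of "-1"] by (metis mult_cancel_right1 not_less_iff_gr_or_eq
        mult_strict_mono' zero_less_one_class.zero_le_one)
  then show ?thesis
    using v_mult[of "-1" x] by simp
qed

lemma v_minus_commute: "v (x - y) = v (y - x)"
  by (metis minus_diff_eq v_minus)

lemma v_divide [simp]: "v (x / y) = v x / v y"
proof (cases "y = 0")
  case False
  then have "v (x / y) * v y = v x"
    by (metis nonzero_eq_divide_eq v_mult)
  with False show ?thesis
    by (simp add: eq_divide_eq)
qed simp

lemma v_add_le: "v x \<le> m \<Longrightarrow> v y \<le> m \<Longrightarrow> v (x + y) \<le> m"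
  using v_add_le_max[of x y] by linarith

lemma v_add_less: "v x < m \<Longrightarrow> v y < m \<Longrightarrow> v (x + y) < m"
  using v_add_le_max[of x y] by linarith

lemma v_add_eq_left: assumes "v y < v x" shows "v (x + y) = v x"
proof -
  have "v x \<le> max (v (x + y)) (v y)"
    using v_add_le_max[of "x + y" "- y"] by simp
  then show ?thesis
    using v_add_le_max[of x y] assms by linarith
qed

lemma v_eq_if_v_diff_less: "v (y - z) < v y \<Longrightarrow> v z = v y"
  using v_add_eq_left[of "z - y" y] v_minus_commute by simp

lemma v_sum_le: "(\<And>i. i \<in> I \<Longrightarrow> v (t i) \<le> m) \<Longrightarrow> 0 \<le> m \<Longrightarrow> v (sum t I) \<le> m"
  by (induction I rule: infinite_finite_induct) (simp_all add: v_add_le)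

lemma v_sum_less: "(\<And>i. i \<in> I \<Longrightarrow> v (t i) < m) \<Longrightarrow> 0 < m \<Longrightarrow> v (sum t I) < m"
  by (induction I rule: infinite_finite_induct) (simp_all add: v_add_less)

lemma v_sum_eq_Max:
  assumes "finite I" "I \<noteq> {}"
    and distinct: "\<And>i j. i \<in> I \<Longrightarrow> j \<in> I \<Longrightarrow> i \<noteq> j \<Longrightarrow> t i \<noteq> 0 \<Longrightarrow> v (t i) \<noteq> v (t j)"
  shows "v (sum t I) = Max ((\<lambda>i. v (t i)) ` I)"
proof -
  obtain i0 where i0: "i0 \<in> I" "v (t i0) = Max ((\<lambda>i. v (t i)) ` I)"
    using Max_in[of "(\<lambda>i. v (t i)) ` I"] assms(1,2) by (metis (no_types, lifting) finite_imageI image_iff image_is_empty)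
  have below: "v (t i) < v (t i0)" if "i \<in> I - {i0}" "t i0 \<noteq> 0" for i
    using distinct[of i0 i] i0 that assms(1) by (metis DiffE Max_ge finite_imageI imageI insertI1 order_less_le)
  show ?thesis
  proof (cases "t i0 = 0")
    case True
    then have "t i = 0" if "i \<in> I" for i
      using i0 that assms(1) v_nonneg[of "t i"] by (metis Max_ge antisym finite_imageI imageI v_eq_0_iff)
    then show ?thesis
      using i0 True by simp
  next
    case False
    have "v (sum t (I - {i0})) < v (t i0)"
      using below False v_pos by (intro v_sum_less) auto
    then show ?thesis
      using i0 assms(1) v_add_eq_left by (simp add: sum.remove)
  qed
qed

lemma v_power_diff_less:
  assumes y: "v y \<le> 1" and z: "v z \<le> 1" and yz: "v (y - z) < 1"
  shows "v (y ^ k - z ^ k) < 1"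
proof (induction k)
  case (Suc k)
  have "y ^ Suc k - z ^ Suc k = y * (y ^ k - z ^ k) + (y - z) * z ^ k"
    by (simp add: algebra_simps)
  moreover have "v y * v (y ^ k - z ^ k) < 1"
    using Suc y v_nonneg[of y] by (meson le_less_trans mult_left_le_one_le v_nonneg)
  moreover have "v (y - z) * v z ^ k < 1"
    using yz z v_nonneg[of z] v_nonneg[of "y - z"]
    by (meson le_less_trans mult_right_le_one_le power_le_one zero_le_power)
  ultimately show ?case
    by (simp add: v_add_less)
qed simp

lemma subset_v_closure: "S \<subseteq> v_closure v S"
  unfolding v_closure_def by (auto intro!: bexI)

end

lemma is_subfield_gen_subfield: "is_subfield (gen_subfield S)"
  unfolding gen_subfield_def is_subfield_def by auto

lemma gen_subfield_superset: "S \<subseteq> gen_subfield S"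
  unfolding gen_subfield_def by auto

lemma gen_subfield_least: "is_subfield M \<Longrightarrow> S \<subseteq> M \<Longrightarrow> gen_subfield S \<subseteq> M"
  unfolding gen_subfield_def by auto

context
  fixes S :: "'a::field set"
  assumes S: "is_subfield S"
begin

lemma subfield_0: "0 \<in> S" and subfield_1: "1 \<in> S"
  using S unfolding is_subfield_def by auto

lemma subfield_add_closed: "x \<in> S \<Longrightarrow> y \<in> S \<Longrightarrow> x + y \<in> S"
  and subfield_mult_closed: "x \<in> S \<Longrightarrow> y \<in> S \<Longrightarrow> x * y \<in> S"
  and subfield_uminus_closed: "x \<in> S \<Longrightarrow> - x \<in> S"
  and subfield_inverse_closed: "x \<in> S \<Longrightarrow> inverse x \<in> S"
  using S unfolding is_subfield_def by auto

lemma subfield_divide_closed: "x \<in> S \<Longrightarrow> y \<in> S \<Longrightarrow> x / y \<in> S"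
  by (simp add: divide_inverse subfield_inverse_closed subfield_mult_closed)

lemma subfield_power_closed: "x \<in> S \<Longrightarrow> x ^ n \<in> S"
  by (induction n) (simp_all add: subfield_1 subfield_mult_closed)

lemma subfield_sum_closed: "(\<And>i. i \<in> I \<Longrightarrow> f i \<in> S) \<Longrightarrow> sum f I \<in> S"
  by (induction I rule: infinite_finite_induct) (simp_all add: subfield_0 subfield_add_closed)

end

section \<open>Gauss-transcendental elements\<close>

definition value_torsion :: "('a::field \<Rightarrow> real) \<Rightarrow> 'a set \<Rightarrow> 'a \<Rightarrow> bool" where
  "value_torsion v S y \<longleftrightarrow> (\<exists>n>0. \<exists>z\<in>S. z \<noteq> 0 \<and> v y ^ n = v z)"

definition residue_algebraic :: "('a::field \<Rightarrow> real) \<Rightarrow> 'a set \<Rightarrow> 'a \<Rightarrow> bool" where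
  "residue_algebraic v S y \<longleftrightarrow>
     (\<exists>n>0. \<exists>a. (\<forall>j<n. a j \<in> S \<and> v (a j) \<le> 1) \<and> v (y ^ n + (\<Sum>j<n. a j * y ^ j)) < 1)"

lemma semi_immediate_iff:
  "semi_immediate v M \<longleftrightarrow>
     (\<forall>y. y \<noteq> 0 \<longrightarrow> value_torsion v M y) \<and> (\<forall>y. v y \<le> 1 \<longrightarrow> residue_algebraic v M y)"
  unfolding semi_immediate_def value_torsion_def residue_algebraic_def by blast

lemma semi_immediate_mono: "S \<subseteq> M \<Longrightarrow> semi_immediate v S \<Longrightarrow> semi_immediate v M"
  unfolding semi_immediate_def by (meson subsetD)

definition gauss_transcendental :: "('a::field \<Rightarrow> real) \<Rightarrow> 'a set \<Rightarrow> 'a \<Rightarrow> bool" where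
  "gauss_transcendental v S f \<longleftrightarrow> (\<forall>Q c. finite Q \<and> Q \<noteq> {} \<and> (\<forall>n\<in>Q. c n \<in> S) \<longrightarrow>
      v (\<Sum>n\<in>Q. c n * f ^ n) = Max ((\<lambda>n. v (c n) * v f ^ n) ` Q))"

lemma gauss_transcendentalD:
  assumes "gauss_transcendental v S f" "finite Q" "Q \<noteq> {}" "\<And>n. n \<in> Q \<Longrightarrow> c n \<in> S"
  shows "v (\<Sum>n\<in>Q. c n * f ^ n) = Max ((\<lambda>n. v (c n) * v f ^ n) ` Q)"
  using assms(1)[unfolded gauss_transcendental_def, rule_format, of Q c] assms(2-4) by blast

lemma sum_split_at_leading_term:
  fixes c :: "nat \<Rightarrow> 'a::field"
  assumes "finite Q" "N \<in> Q" "c N \<noteq> 0"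
  shows "(\<Sum>n\<in>Q. c n * f ^ n) =
           c N * (f ^ N + (\<Sum>j<N. (if j \<in> Q then c j / c N else 0) * f ^ j))
           + (\<Sum>n\<in>Q - {..N}. c n * f ^ n)"
proof -
  have "(\<Sum>n\<in>Q \<inter> {..N}. c n * f ^ n) = (\<Sum>n<Suc N. if n \<in> Q then c n * f ^ n else 0)"
    by (simp add: sum.inter_restrict[symmetric] Int_commute lessThan_Suc_atMost)
  also have "\<dots> = c N * f ^ N + (\<Sum>j<N. c N * ((if j \<in> Q then c j / c N else 0) * f ^ j))"
    using assms(2,3) by (simp add: add.commute, intro sum.cong) auto
  finally have "(\<Sum>n\<in>Q \<inter> {..N}. c n * f ^ n)
      = c N * (f ^ N + (\<Sum>j<N. (if j \<in> Q then c j / c N else 0) * f ^ j))"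
    by (simp add: sum_distrib_left distrib_left)
  then show ?thesis
    using sum.Int_Diff[OF assms(1), of "\<lambda>n. c n * f ^ n" "{..N}"] by simp
qed

context nonarch_valued
begin

lemma gauss_transcendental_if_not_value_torsion:
  assumes S: "is_subfield S" and "f \<noteq> 0" and not_torsion: "\<not> value_torsion v S f"
  shows "gauss_transcendental v S f"
  unfolding gauss_transcendental_def
proof (intro allI impI)
  fix Q and c :: "nat \<Rightarrow> 'l"
  assume Q: "finite Q \<and> Q \<noteq> {} \<and> (\<forall>n\<in>Q. c n \<in> S)"
  have different: "v (c i * f ^ i) \<noteq> v (c j * f ^ j)"
    if "i \<in> Q" "j \<in> Q" "j < i" "c i \<noteq> 0" "c j \<noteq> 0" for i j
  proof
    assume "v (c i * f ^ i) = v (c j * f ^ j)"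
    then have "v (c i) * (v f ^ (i - j) * v f ^ j) = v (c j) * v f ^ j"
      using \<open>j < i\<close> by (simp add: power_add[symmetric])
    then have "v f ^ (i - j) = v (c j / c i)"
      using that(4) \<open>f \<noteq> 0\<close> by (simp add: field_simps)
    moreover have "c j / c i \<in> S" "c j / c i \<noteq> 0"
      using Q that by (simp_all add: subfield_divide_closed[OF S])
    ultimately have "value_torsion v S f"
      unfolding value_torsion_def using \<open>j < i\<close> zero_less_diff by blast
    with not_torsion show False ..
  qed
  have "v (\<Sum>n\<in>Q. c n * f ^ n) = Max ((\<lambda>n. v (c n * f ^ n)) ` Q)"
  proof (rule v_sum_eq_Max)
    fix i j assume ij: "i \<in> Q" "j \<in> Q" "i \<noteq> j" "c i * f ^ i \<noteq> 0"
    show "v (c i * f ^ i) \<noteq> v (c j * f ^ j)"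
    proof (cases "c j = 0")
      case True
      then show ?thesis using ij v_pos by fastforce
    next
      case False
      then show ?thesis
        using ij different[of i j] different[of j i] by (auto simp: neq_iff)
    qed
  qed (use Q in auto)
  then show "v (\<Sum>n\<in>Q. c n * f ^ n) = Max ((\<lambda>n. v (c n) * v f ^ n) ` Q)"
    by simp
qed

lemma v_monic_eq_1_if_not_residue_algebraic:
  assumes "v f = 1" "\<not> residue_algebraic v S f" "\<forall>j<N. a j \<in> S \<and> v (a j) \<le> 1"
  shows "v (f ^ N + (\<Sum>j<N. a j * f ^ j)) = 1"
proof -
  have "v (f ^ N + (\<Sum>j<N. a j * f ^ j)) \<le> 1"
    using assms(1,3) v_nonneg by (intro v_add_le v_sum_le) (auto intro: mult_le_one)
  moreover have "\<not> v (f ^ N + (\<Sum>j<N. a j * f ^ j)) < 1"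
  proof
    assume less: "v (f ^ N + (\<Sum>j<N. a j * f ^ j)) < 1"
    then have "0 < N"
      by (cases N) auto
    with less assms(3) have "residue_algebraic v S f"
      unfolding residue_algebraic_def by blast
    with assms(2) show False ..
  qed
  ultimately show ?thesis
    by simp
qed

text \<open>Dividing by the last coefficient c N of maximal value leaves a monic polynomial in f of value 1,
  while the terms of higher degree are strictly smaller.\<close>

lemma gauss_transcendental_if_not_residue_algebraic:
  assumes S: "is_subfield S" and vf: "v f = 1" and not_algebraic: "\<not> residue_algebraic v S f"
  shows "gauss_transcendental v S f"
  unfolding gauss_transcendental_def
proof (intro allI impI)
  fix Q and c :: "nat \<Rightarrow> 'l"
  assume "finite Q \<and> Q \<noteq> {} \<and> (\<forall>n\<in>Q. c n \<in> S)"
  then have Q: "finite Q" "Q \<noteq> {}" and cS: "\<And>n. n \<in> Q \<Longrightarrow> c n \<in> S" by auto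
  define m where "m = Max ((\<lambda>n. v (c n)) ` Q)"
  have le_m: "v (c n) \<le> m" if "n \<in> Q" for n
    unfolding m_def using Q that by simp
  have "v (\<Sum>n\<in>Q. c n * f ^ n) = m"
  proof (cases "m = 0")
    case True
    then have "c n = 0" if "n \<in> Q" for n
      using le_m[OF that] v_nonneg[of "c n"] by simp
    then show ?thesis using True by simp
  next
    case False
    define N where "N = Max {n \<in> Q. v (c n) = m}"
    have "m \<in> (\<lambda>n. v (c n)) ` Q"
      unfolding m_def using Q by simp
    then have N: "N \<in> Q" "v (c N) = m"
      using Max_in[of "{n \<in> Q. v (c n) = m}"] Q(1) unfolding N_def by auto
    have above_N: "v (c n) < m" if "n \<in> Q - {..N}" for n
      using le_m[of n] that Q(1) unfolding N_def by (auto simp: order_less_le)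
    have "c N \<noteq> 0" and m_pos: "0 < m"
      using N False v_pos by auto
    define a where "a j = (if j \<in> Q then c j / c N else 0)" for j
    have a: "a j \<in> S \<and> v (a j) \<le> 1" for j
      using le_m N \<open>c N \<noteq> 0\<close> v_pos[of "c N"]
      by (simp add: a_def subfield_0[OF S] subfield_divide_closed[OF S] cS)
    have "v (c N * (f ^ N + (\<Sum>j<N. a j * f ^ j))) = m"
      using v_monic_eq_1_if_not_residue_algebraic[OF vf not_algebraic] a N by simp
    moreover have "v (\<Sum>n\<in>Q - {..N}. c n * f ^ n) < m"
      using above_N vf m_pos by (intro v_sum_less) auto
    ultimately show ?thesis
      using sum_split_at_leading_term[of Q N c f] Q(1) N(1) \<open>c N \<noteq> 0\<close> v_add_eq_left
      unfolding a_def by simp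
  qed
  then show "v (\<Sum>n\<in>Q. c n * f ^ n) = Max ((\<lambda>n. v (c n) * v f ^ n) ` Q)"
    unfolding m_def using vf by simp
qed

end

lemma CHAR_eq_prime:
  assumes "prime p" "of_nat p = (0::'a::semiring_1)"
  shows "CHAR('a) = p"
proof -
  have "CHAR('a) dvd p"
    using assms(2) by (simp add: of_nat_eq_0_iff_char_dvd)
  moreover have "CHAR('a) \<noteq> 1"
    using of_nat_CHAR[where 'a='a] by (metis of_nat_1 zero_neq_one)
  ultimately show ?thesis
    using assms(1) unfolding prime_nat_iff by blast
qed

lemma (in idom) power_CHAR_power_inj:
  assumes "prime CHAR('a)" "x ^ (CHAR('a) ^ k) = y ^ (CHAR('a) ^ k)"
  shows "x = y"
proof -
  have "x ^ (CHAR('a) ^ k) = (x - y) ^ (CHAR('a) ^ k) + y ^ (CHAR('a) ^ k)"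
    using freshmans_dream'[OF assms(1) refl, of "x - y" y] by simp
  with assms show ?thesis
    by simp
qed

lemma common_p_power_denominator:
  fixes Q :: "rat set"
  assumes "finite Q" "\<forall>q\<in>Q. 0 \<le> q \<and> (\<exists>k. q * of_nat p ^ k \<in> \<int>)" "0 < p"
  obtains n k where "\<And>q. q \<in> Q \<Longrightarrow> q = of_nat (n q) / of_nat p ^ k"
proof -
  obtain kq where kq: "\<forall>q\<in>Q. q * of_nat p ^ kq q \<in> \<int>"
    using assms(2) by metis
  define k where "k = (\<Sum>q\<in>Q. kq q)"
  have rep: "\<exists>n. q = of_nat n / of_nat p ^ k" if "q \<in> Q" for q
  proof -
    have "kq q \<le> k"
      unfolding k_def using assms(1) that by (intro member_le_sum) auto
    then have "q * of_nat p ^ k = (q * of_nat p ^ kq q) * of_nat p ^ (k - kq q)"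
      by (simp add: mult.assoc flip: power_add)
    also have "\<dots> \<in> \<int>"
      by (rule Ints_mult[OF _ Ints_power[OF Ints_of_nat]]) (use kq that in blast)
    finally have "q * of_nat p ^ k \<in> \<int>" .
    then obtain z where z: "q * of_nat p ^ k = of_int z"
      by (elim Ints_cases)
    moreover have "0 \<le> z"
      using z assms(2) that by (metis of_int_0_le_iff of_nat_0_le_iff mult_nonneg_nonneg zero_le_power)
    ultimately have "q = of_nat (nat z) / of_nat p ^ k"
      using assms(3) by (simp add: field_simps)
    then show ?thesis ..
  qed
  show thesis
  proof (rule that)
    show "q = of_nat (SOME n. q = of_nat n / of_nat p ^ k) / of_nat p ^ k" if "q \<in> Q" for q
      using someI_ex[OF rep[OF that]] .
  qed
qed

text \<open>f^q for q = n / p^k, determined by (f^q)^(p^k) = f^n; a junk value if f has no p^k-th root.\<close>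

definition frac_pow :: "nat \<Rightarrow> 'a::field \<Rightarrow> rat \<Rightarrow> 'a" where
  "frac_pow p f q = (THE y. \<exists>k n::nat. q = of_nat n / of_nat p ^ k \<and> y ^ (p ^ k) = f ^ n)"

lemma root_pow_eq_frac_pow: "root_pow p x e i = frac_pow p (x i) (e i)"
  unfolding root_pow_def frac_pow_def ..

locale char_p_valued = nonarch_valued v for v :: "'l::field \<Rightarrow> real" +
  fixes p :: nat
  assumes prime_p: "prime p" and of_nat_p: "of_nat p = (0::'l)"
begin

lemma CHAR_eq_p: "CHAR('l) = p"
  using CHAR_eq_prime[OF prime_p of_nat_p] .

lemma p_pos: "0 < p"
  using prime_p by (simp add: prime_gt_0_nat)

lemma p_power_sum: "sum f I ^ (p ^ k) = (\<Sum>i\<in>I. f i ^ (p ^ k))" for f :: "'b \<Rightarrow> 'l"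
  using freshmans_dream_sum'[where m = "p ^ k" and n = k and f = f and A = I] prime_p CHAR_eq_p
  by simp

lemma p_power_inj: "x ^ (p ^ k) = y ^ (p ^ k) \<Longrightarrow> x = y" for x y :: 'l
  using power_CHAR_power_inj[of x k y] prime_p CHAR_eq_p by simp

lemma frac_pow_unique:
  fixes y1 y2 f :: 'l
  assumes "y1 ^ (p ^ k1) = f ^ n1" "y2 ^ (p ^ k2) = f ^ n2"
    and "(of_nat n1 / of_nat p ^ k1 :: rat) = of_nat n2 / of_nat p ^ k2"
  shows "y1 = y2"
proof -
  have "(of_nat (n1 * p ^ k2) :: rat) = of_nat (n2 * p ^ k1)"
    using assms(3) p_pos by (simp add: field_simps)
  then have n: "n1 * p ^ k2 = n2 * p ^ k1"
    by (simp only: of_nat_eq_iff)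
  have "y1 ^ (p ^ (k1 + k2)) = (y1 ^ (p ^ k1)) ^ (p ^ k2)"
    by (simp add: power_add power_mult)
  also have "\<dots> = f ^ (n1 * p ^ k2)"
    using assms(1) by (simp add: power_mult)
  also have "\<dots> = (f ^ n2) ^ (p ^ k1)"
    using n by (simp add: power_mult)
  also have "\<dots> = (y2 ^ (p ^ k2)) ^ (p ^ k1)"
    using assms(2) by simp
  also have "\<dots> = y2 ^ (p ^ (k1 + k2))"
    by (simp only: power_add mult.commute[of "p ^ k1"] power_mult)
  finally show ?thesis
    by (rule p_power_inj)
qed

lemma frac_powI:
  fixes f y :: 'l
  assumes "q = of_nat n / of_nat p ^ k" "y ^ (p ^ k) = f ^ n"
  shows "frac_pow p f q = y"
  unfolding frac_pow_def
proof (rule the_equality)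
  show "\<exists>k n::nat. q = of_nat n / of_nat p ^ k \<and> y ^ (p ^ k) = f ^ n"
    using assms by blast
  fix y' assume "\<exists>k n::nat. q = of_nat n / of_nat p ^ k \<and> y' ^ (p ^ k) = f ^ n"
  then obtain k' n' where "q = of_nat n' / of_nat p ^ k'" "y' ^ (p ^ k') = f ^ n'"
    by blast
  then show "y' = y"
    using assms by (intro frac_pow_unique[of y' k' f n' y k n]) auto
qed

lemma frac_pow_of_nat: "frac_pow p f (of_nat n) = f ^ n" for f :: 'l
  by (rule frac_powI[of _ n 0]) simp_all

lemma frac_pow_power:
  fixes f :: 'l
  assumes "\<forall>k. \<exists>y. y ^ (p ^ k) = f" and "q = of_nat n / of_nat p ^ k"
  shows "frac_pow p f q ^ (p ^ k) = f ^ n"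
proof -
  obtain y where "y ^ (p ^ k) = f"
    using assms(1) by blast
  then have "(y ^ n) ^ (p ^ k) = f ^ n"
    by (metis power_mult mult.commute)
  then show ?thesis
    using frac_powI[OF assms(2), of "y ^ n"] by simp
qed

lemma v_frac_pow:
  assumes "f \<noteq> 0" "\<forall>k. \<exists>y. y ^ (p ^ k) = f" and q: "q = of_nat n / of_nat p ^ k"
  shows "v (frac_pow p f q) = v f powr real_of_rat q"
proof -
  have "real_of_rat q * real (p ^ k) = real n"
    using q p_pos by (simp add: of_rat_divide of_rat_power)
  moreover have "(v f powr real_of_rat q) ^ (p ^ k) = (v f powr real_of_rat q) powr real (p ^ k)"
    using v_pos[OF assms(1)] by (subst powr_realpow) auto
  ultimately have "(v f powr real_of_rat q) ^ (p ^ k) = v f powr real n"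
    by (simp add: powr_powr)
  then have "(v f powr real_of_rat q) ^ (p ^ k) = v f ^ n"
    using v_pos[OF assms(1)] by (simp add: powr_realpow)
  moreover have "v (frac_pow p f q) ^ (p ^ k) = v f ^ n"
    using frac_pow_power[OF assms(2) q] v_power by metis
  ultimately have "v (frac_pow p f q) ^ (p ^ k) = (v f powr real_of_rat q) ^ (p ^ k)"
    by simp
  then show ?thesis
    by (rule power_eq_imp_eq_base) (use p_pos v_nonneg in simp_all)
qed

end

section \<open>Gauss norms on perfect polynomial rings\<close>

lemma eq_Max_if_power_eq_Max_powers:
  fixes h :: "'a \<Rightarrow> real"
  assumes eq: "a ^ N = Max ((\<lambda>q. h q ^ N) ` Q)" and "0 < N" "0 \<le> a"
    and Q: "finite Q" "Q \<noteq> {}" "\<And>q. q \<in> Q \<Longrightarrow> 0 \<le> h q"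
  shows "a = Max (h ` Q)"
proof -
  have mono: "mono (\<lambda>y::real. max 0 y ^ N)"
    by (intro monoI power_mono) auto
  have "0 \<le> Max (h ` Q)"
    using Q by (meson Max_ge_iff ex_in_conv finite_imageI image_eqI image_is_empty)
  moreover have "(\<lambda>y. max 0 y ^ N) ` h ` Q = (\<lambda>q. h q ^ N) ` Q"
    using Q(3) by (auto simp: image_image max_absorb2)
  ultimately have "a ^ N = Max (h ` Q) ^ N"
    using eq mono_Max_commute[OF mono, of "h ` Q"] Q(1,2) by (simp add: max_absorb2)
  then show ?thesis
    using \<open>0 < N\<close> \<open>0 \<le> a\<close> \<open>0 \<le> Max (h ` Q)\<close> by (simp add: power_eq_iff_eq_base)
qed

lemma Max_image_fibres:
  fixes a :: "'e \<Rightarrow> real" and b :: "'q \<Rightarrow> real"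
  assumes E: "finite E" "E \<noteq> {}" and b: "\<And>e. e \<in> E \<Longrightarrow> 0 \<le> b (h e)"
  shows "Max ((\<lambda>q. Max (a ` {e\<in>E. h e = q}) * b q) ` h ` E) = Max ((\<lambda>e. a e * b (h e)) ` E)"
proof (rule antisym)
  show "Max ((\<lambda>q. Max (a ` {e\<in>E. h e = q}) * b q) ` h ` E) \<le> Max ((\<lambda>e. a e * b (h e)) ` E)"
  proof (rule Max.boundedI)
    fix y assume "y \<in> (\<lambda>q. Max (a ` {e\<in>E. h e = q}) * b q) ` h ` E"
    then obtain e where "e \<in> E" and y: "y = Max (a ` {e'\<in>E. h e' = h e}) * b (h e)"
      by blast
    then have "Max (a ` {e'\<in>E. h e' = h e}) \<in> a ` {e'\<in>E. h e' = h e}"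
      using E(1) by (intro Max_in) auto
    then obtain e' where "e' \<in> E" "h e' = h e" "y = a e' * b (h e')"
      using y by auto
    moreover have "a e' * b (h e') \<le> Max ((\<lambda>e. a e * b (h e)) ` E)"
      using E(1) \<open>e' \<in> E\<close> by (intro Max_ge) auto
    ultimately show "y \<le> Max ((\<lambda>e. a e * b (h e)) ` E)"
      by simp
  qed (use E in auto)
  show "Max ((\<lambda>e. a e * b (h e)) ` E) \<le> Max ((\<lambda>q. Max (a ` {e\<in>E. h e = q}) * b q) ` h ` E)"
  proof (rule Max.boundedI)
    fix y assume "y \<in> (\<lambda>e. a e * b (h e)) ` E"
    then obtain e where e: "e \<in> E" "y = a e * b (h e)"
      by blast
    have "a e \<le> Max (a ` {e'\<in>E. h e' = h e})"
      using E(1) e(1) by (intro Max_ge) auto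
    then have "y \<le> Max (a ` {e'\<in>E. h e' = h e}) * b (h e)"
      using b[OF e(1)] e(2) by (simp add: mult_right_mono)
    also have "\<dots> \<le> Max ((\<lambda>q. Max (a ` {e\<in>E. h e = q}) * b q) ` h ` E)"
      using E(1) e(1) by (intro Max_ge) auto
    finally show "y \<le> \<dots>" .
  qed (use E in auto)
qed

definition gauss_weight :: "nat \<Rightarrow> (nat \<Rightarrow> real) \<Rightarrow> (nat \<Rightarrow> rat) \<Rightarrow> real" where
  "gauss_weight l r e = (\<Prod>i<l. r i powr real_of_rat (e i))"

lemma gauss_norm_cond_iff:
  "gauss_norm_cond p v K l r x \<longleftrightarrow>
     (\<forall>E c. finite E \<and> E \<noteq> {} \<and> (\<forall>e\<in>E. admissible_exp p l e) \<and> (\<forall>e\<in>E. c e \<in> K) \<longrightarrow>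
        v (\<Sum>e\<in>E. c e * Defs.mon p l x e) = Max ((\<lambda>e. v (c e) * gauss_weight l r e) ` E))"
  unfolding gauss_norm_cond_def gauss_weight_def ..

lemma gauss_norm_condD:
  assumes "gauss_norm_cond p v K l r x" "finite E" "E \<noteq> {}"
    and "\<And>e. e \<in> E \<Longrightarrow> admissible_exp p l e" "\<And>e. e \<in> E \<Longrightarrow> c e \<in> K"
  shows "v (\<Sum>e\<in>E. c e * Defs.mon p l x e) = Max ((\<lambda>e. v (c e) * gauss_weight l r e) ` E)"
  using assms(1)[unfolded gauss_norm_cond_iff, rule_format, of E c] assms(2-5) by blast

lemma gauss_weight_pos:
  assumes "\<And>i. i < l \<Longrightarrow> 0 < r i"
  shows "0 < gauss_weight l r e"
  unfolding gauss_weight_def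
proof (rule prod_pos)
  fix i assume "i \<in> {..<l}"
  then show "0 < r i powr real_of_rat (e i)"
    using assms[of i] by simp
qed

lemma gauss_weight_Suc_upd:
  "gauss_weight (Suc l) (r(l := s)) e = gauss_weight l r (e(l := 0)) * s powr real_of_rat (e l)"
proof -
  have "(\<Prod>i<l. (r(l := s)) i powr real_of_rat (e i)) = (\<Prod>i<l. r i powr real_of_rat ((e(l := 0)) i))"
    by (rule prod.cong) auto
  then show ?thesis
    unfolding gauss_weight_def by simp
qed

lemma mon_Suc_upd:
  "Defs.mon p (Suc l) (x(l := f)) e = Defs.mon p l x (e(l := 0)) * frac_pow p f (e l)"
proof -
  have "(\<Prod>i<l. frac_pow p ((x(l := f)) i) (e i)) = (\<Prod>i<l. frac_pow p (x i) ((e(l := 0)) i))"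
    by (rule prod.cong) auto
  then show ?thesis
    unfolding Defs.mon_def root_pow_eq_frac_pow by simp
qed

lemma admissible_exp_upd_0:
  assumes "admissible_exp p (Suc l) e"
  shows "admissible_exp p l (e(l := 0))"
proof -
  have "(e(l := 0)) i = 0" if "l \<le> i" for i
    using assms that unfolding admissible_exp_def by (cases "i = l") auto
  moreover have "\<exists>k. (e(l := 0)) i * of_nat p ^ k \<in> \<int>" for i
    using assms unfolding admissible_exp_def by (cases "i = l") auto
  ultimately show ?thesis
    using assms unfolding admissible_exp_def by simp
qed

lemma inj_on_fun_upd_fibre: "inj_on (\<lambda>e. e(l := c)) {e. e l = q}"
proof (rule inj_onI)
  fix e1 e2 assume "e1 \<in> {e. e l = q}" "e2 \<in> {e. e l = q}" and eq: "e1(l := c) = e2(l := c)"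
  show "e1 = e2"
  proof
    fix i show "e1 i = e2 i"
      using \<open>e1 \<in> _\<close> \<open>e2 \<in> _\<close> fun_cong[OF eq, of i] by (cases "i = l") auto
  qed
qed

lemma gauss_norm_cond_0: "gauss_norm_cond p v K 0 r x"
proof -
  have zero: "e = (\<lambda>_. 0)" if "admissible_exp p 0 e" for e :: "nat \<Rightarrow> rat"
    using that unfolding admissible_exp_def by auto
  show ?thesis
    unfolding gauss_norm_cond_iff
  proof (intro allI impI)
    fix E and c :: "(nat \<Rightarrow> rat) \<Rightarrow> 'a"
    assume "finite E \<and> E \<noteq> {} \<and> (\<forall>e\<in>E. admissible_exp p 0 e) \<and> (\<forall>e\<in>E. c e \<in> K)"
    then have "E = {\<lambda>_. 0}"
      using zero by blast
    then show "v (\<Sum>e\<in>E. c e * Defs.mon p 0 x e) = Max ((\<lambda>e. v (c e) * gauss_weight 0 r e) ` E)"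
      by (simp add: Defs.mon_def gauss_weight_def)
  qed
qed

lemma gauss_norm_cond_reindex:
  assumes g: "gauss_norm_cond p v K l r x"
    and I: "finite I" "I \<noteq> {}" "inj_on \<phi> I"
    and "\<And>i. i \<in> I \<Longrightarrow> admissible_exp p l (\<phi> i)" "\<And>i. i \<in> I \<Longrightarrow> c i \<in> K"
  shows "v (\<Sum>i\<in>I. c i * Defs.mon p l x (\<phi> i)) = Max ((\<lambda>i. v (c i) * gauss_weight l r (\<phi> i)) ` I)"
proof -
  define c' where "c' = c \<circ> inv_into I \<phi>"
  have "v (\<Sum>e\<in>\<phi> ` I. c' e * Defs.mon p l x e) = Max ((\<lambda>e. v (c' e) * gauss_weight l r e) ` \<phi> ` I)"
    using I assms(5,6) by (intro gauss_norm_condD[OF g]) (auto simp: c'_def inv_into_f_f)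
  moreover have "(\<Sum>e\<in>\<phi> ` I. c' e * Defs.mon p l x e) = (\<Sum>i\<in>I. c i * Defs.mon p l x (\<phi> i))"
    using I(3) by (simp add: sum.reindex c'_def inv_into_f_f)
  moreover have "(\<lambda>e. v (c' e) * gauss_weight l r e) ` \<phi> ` I = (\<lambda>i. v (c i) * gauss_weight l r (\<phi> i)) ` I"
    using I(3) unfolding image_image c'_def by (intro image_cong) simp_all
  ultimately show ?thesis
    by simp
qed

definition perf_adjoin :: "nat \<Rightarrow> 'a::field set \<Rightarrow> nat \<Rightarrow> (nat \<Rightarrow> 'a) \<Rightarrow> 'a set" where
  "perf_adjoin p K l x = gen_subfield (K \<union> {Defs.mon p l x e | e. admissible_exp p l e})"

lemma is_subfield_perf_adjoin: "is_subfield (perf_adjoin p K l x)"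
  unfolding perf_adjoin_def by (rule is_subfield_gen_subfield)

lemma perf_adjoin_superset: "K \<subseteq> perf_adjoin p K l x"
  unfolding perf_adjoin_def by (rule subset_trans[OF Un_upper1 gen_subfield_superset])

lemma mon_in_perf_adjoin: "admissible_exp p l e \<Longrightarrow> Defs.mon p l x e \<in> perf_adjoin p K l x"
  unfolding perf_adjoin_def by (rule subsetD[OF gen_subfield_superset]) blast

lemma sum_mon_upd_in_perf_adjoin:
  assumes "\<And>e. e \<in> E \<Longrightarrow> c e \<in> K \<and> admissible_exp p (Suc l) e"
  shows "(\<Sum>e\<in>E. c e * Defs.mon p l x (e(l := 0))) \<in> perf_adjoin p K l x"
proof (rule subfield_sum_closed[OF is_subfield_perf_adjoin])
  fix e assume "e \<in> E"
  then have "c e \<in> perf_adjoin p K l x"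
    using perf_adjoin_superset assms by blast
  moreover have "Defs.mon p l x (e(l := 0)) \<in> perf_adjoin p K l x"
    using mon_in_perf_adjoin admissible_exp_upd_0 assms \<open>e \<in> E\<close> by blast
  ultimately show "c e * Defs.mon p l x (e(l := 0)) \<in> perf_adjoin p K l x"
    by (rule subfield_mult_closed[OF is_subfield_perf_adjoin])
qed

context char_p_valued
begin

lemma gauss_transcendental_frac_pow_sum:
  assumes S: "is_subfield S" and gauss: "gauss_transcendental v S f" and "f \<noteq> 0"
    and roots: "\<forall>k. \<exists>y. y ^ (p ^ k) = f"
    and Q: "finite Q" "Q \<noteq> {}" "\<forall>q\<in>Q. 0 \<le> q \<and> (\<exists>k. q * of_nat p ^ k \<in> \<int>)"
    and g: "\<And>q. q \<in> Q \<Longrightarrow> g q \<in> S"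
  shows "v (\<Sum>q\<in>Q. g q * frac_pow p f q) = Max ((\<lambda>q. v (g q) * v f powr real_of_rat q) ` Q)"
proof -
  obtain nq k where nq: "\<And>q. q \<in> Q \<Longrightarrow> q = of_nat (nq q) / of_nat p ^ k"
    by (rule common_p_power_denominator[OF Q(1,3) p_pos], rule that)
  have inj: "inj_on nq Q"
    by (rule inj_onI) (metis nq)
  define N where "N = p ^ k"
  define h where "h q = v (g q) * v f powr real_of_rat q" for q
  have h: "h q ^ N = v (g q ^ N) * v f ^ nq q" if "q \<in> Q" for q
  proof -
    have "(v f powr real_of_rat q) ^ N = v (frac_pow p f q ^ N)"
      using v_frac_pow[OF \<open>f \<noteq> 0\<close> roots nq[OF that]] by simp
    then show ?thesis
      using frac_pow_power[OF roots nq[OF that]] unfolding h_def N_def by (simp add: power_mult_distrib)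
  qed
  txt \<open>Raising to the power p^k clears the denominators of the exponents.\<close>
  have "(\<Sum>q\<in>Q. g q * frac_pow p f q) ^ N = (\<Sum>q\<in>Q. g q ^ N * f ^ nq q)"
    unfolding N_def p_power_sum power_mult_distrib
    by (intro sum.cong refl) (simp add: frac_pow_power[OF roots nq])
  then have "v (\<Sum>q\<in>Q. g q * frac_pow p f q) ^ N = v (\<Sum>q\<in>Q. g q ^ N * f ^ nq q)"
    by (metis v_power)
  also have "\<dots> = v (\<Sum>n\<in>nq ` Q. g (inv_into Q nq n) ^ N * f ^ n)"
    using inj by (simp add: sum.reindex)
  also have "\<dots> = Max ((\<lambda>n. v (g (inv_into Q nq n) ^ N) * v f ^ n) ` nq ` Q)"
    using Q g by (intro gauss_transcendentalD[OF gauss]) (auto simp: subfield_power_closed[OF S] inv_into_into)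
  also have "(\<lambda>n. v (g (inv_into Q nq n) ^ N) * v f ^ n) ` nq ` Q = (\<lambda>q. h q ^ N) ` Q"
    unfolding image_image using inj h by (intro image_cong) (simp_all add: inv_into_f_f)
  finally have "v (\<Sum>q\<in>Q. g q * frac_pow p f q) ^ N = Max ((\<lambda>q. h q ^ N) ` Q)" .
  then have "v (\<Sum>q\<in>Q. g q * frac_pow p f q) = Max (h ` Q)"
    by (rule eq_Max_if_power_eq_Max_powers) (use Q(1,2) p_pos v_nonneg in \<open>simp_all add: N_def h_def\<close>)
  then show ?thesis
    unfolding h_def .
qed

text \<open>Grouping the terms by the exponent q of the new variable x l = f gives a sum of G q * f^q whose
  coefficients lie in perf_adjoin p K l x, where the Gauss norm in l variables applies.\<close>

lemma gauss_norm_cond_Suc: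
  assumes g: "gauss_norm_cond p v K l r x" and "f \<noteq> 0" and roots: "\<forall>k. \<exists>y. y ^ (p ^ k) = f"
    and gauss: "gauss_transcendental v (perf_adjoin p K l x) f"
  shows "gauss_norm_cond p v K (Suc l) (r(l := v f)) (x(l := f))"
  unfolding gauss_norm_cond_iff
proof (intro allI impI)
  fix E and c :: "(nat \<Rightarrow> rat) \<Rightarrow> 'l"
  assume "finite E \<and> E \<noteq> {} \<and> (\<forall>e\<in>E. admissible_exp p (Suc l) e) \<and> (\<forall>e\<in>E. c e \<in> K)"
  then have E: "finite E" "E \<noteq> {}" and adm: "\<And>e. e \<in> E \<Longrightarrow> admissible_exp p (Suc l) e"
    and cK: "\<And>e. e \<in> E \<Longrightarrow> c e \<in> K" by auto
  define fibre where "fibre q = {e\<in>E. e l = q}" for q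
  define G where "G q = (\<Sum>e\<in>fibre q. c e * Defs.mon p l x (e(l := 0)))" for q
  have fibre: "finite (fibre q)" "fibre q \<subseteq> E" for q
    unfolding fibre_def using E by auto
  have "(\<Sum>e\<in>E. c e * Defs.mon p (Suc l) (x(l := f)) e)
      = (\<Sum>e\<in>E. c e * Defs.mon p l x (e(l := 0)) * frac_pow p f (e l))"
    by (simp add: mon_Suc_upd mult.assoc)
  also have "\<dots> = (\<Sum>q\<in>(\<lambda>e. e l) ` E. \<Sum>e\<in>fibre q. c e * Defs.mon p l x (e(l := 0)) * frac_pow p f (e l))"
    unfolding fibre_def by (rule sum.group[symmetric]) (use E(1) in auto)
  also have "\<dots> = (\<Sum>q\<in>(\<lambda>e. e l) ` E. G q * frac_pow p f q)"
    unfolding G_def fibre_def by (simp add: sum_distrib_right)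
  also have "v \<dots> = Max ((\<lambda>q. v (G q) * v f powr real_of_rat q) ` (\<lambda>e. e l) ` E)"
  proof (rule gauss_transcendental_frac_pow_sum[OF is_subfield_perf_adjoin gauss \<open>f \<noteq> 0\<close> roots])
    show "\<forall>q\<in>(\<lambda>e. e l) ` E. 0 \<le> q \<and> (\<exists>k. q * of_nat p ^ k \<in> \<int>)"
      using adm unfolding admissible_exp_def by blast
    show "G q \<in> perf_adjoin p K l x" for q
      unfolding G_def using fibre cK adm by (intro sum_mon_upd_in_perf_adjoin) blast
  qed (use E in auto)
  also have "(\<lambda>q. v (G q) * v f powr real_of_rat q) ` (\<lambda>e. e l) ` E
      = (\<lambda>q. Max ((\<lambda>e. v (c e) * gauss_weight l r (e(l := 0))) ` fibre q) * v f powr real_of_rat q)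
          ` (\<lambda>e. e l) ` E"
  proof (intro image_cong refl arg_cong2[where f = "(*)"])
    fix q assume "q \<in> (\<lambda>e. e l) ` E"
    then show "v (G q) = Max ((\<lambda>e. v (c e) * gauss_weight l r (e(l := 0))) ` fibre q)"
      unfolding G_def using fibre cK adm
      using inj_on_subset[OF inj_on_fun_upd_fibre, of "fibre q" l q 0]
      by (intro gauss_norm_cond_reindex[OF g] admissible_exp_upd_0) (auto simp: fibre_def)
  qed
  also have "Max \<dots> = Max ((\<lambda>e. v (c e) * gauss_weight l r (e(l := 0)) * v f powr real_of_rat (e l)) ` E)"
    unfolding fibre_def by (rule Max_image_fibres[OF E]) simp
  finally show "v (\<Sum>e\<in>E. c e * Defs.mon p (Suc l) (x(l := f)) e)
      = Max ((\<lambda>e. v (c e) * gauss_weight (Suc l) (r(l := v f)) e) ` E)"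
    by (simp only: gauss_weight_Suc_upd mult.assoc)
qed

end

section \<open>A dimension count over a subfield\<close>

text \<open>This is ring_of_type_algebra of HOL-Algebra.Algebraic_Closure_Type, which is not imported
  because its Divisibility.prime would shadow Factorial_Ring.prime.\<close>

definition field_ring :: "'a::field ring" where
  "field_ring = \<lparr>carrier = UNIV, monoid.mult = (*), one = 1, ring.zero = 0, add = (+)\<rparr>"

lemma field_ring_simps [simp]:
  "carrier field_ring = UNIV" "monoid.mult field_ring x y = x * y" "one field_ring = 1"
  "ring.zero field_ring = 0" "add field_ring x y = x + y"
  by (simp_all add: field_ring_def)

lemma field_ring_is_field: "field (field_ring :: 'a::field ring)"
proof -
  have "cring (field_ring :: 'a ring)"
    by unfold_locales (auto simp: algebra_simps Units_def intro: exI[of _ "- x" for x :: 'a])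
  then show ?thesis
  proof (rule cring.cring_fieldI2)
    show "\<exists>b\<in>carrier field_ring. a \<otimes>\<^bsub>field_ring\<^esub> b = \<one>\<^bsub>field_ring\<^esub>"
      if "a \<noteq> \<zero>\<^bsub>field_ring\<^esub>" for a :: 'a
      using that by (intro bexI[of _ "inverse a"]) simp_all
  qed simp
qed

lemma subfield_field_ring:
  assumes "is_subfield K"
  shows "subfield K field_ring"
proof -
  interpret F: field "field_ring :: 'a::field ring"
    by (rule field_ring_is_field)
  have minus: "a_inv field_ring x = - x" for x :: 'a
    by (rule F.minus_equality) simp_all
  have inv: "m_inv field_ring x = inverse x" if "x \<noteq> 0" for x :: 'a
    using that by (intro F.inv_char) simp_all
  have "subring K field_ring"
    using assms by (intro F.subringI) (auto simp: minus subfield_1 subfield_uminus_closed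
        subfield_mult_closed subfield_add_closed)
  then show ?thesis
    by (rule F.subfieldI') (use assms in \<open>auto simp: inv subfield_inverse_closed\<close>)
qed

lemma field_ring_is_ring: "ring (field_ring :: 'a::field ring)"
  using field_ring_is_field by (rule field.is_ring)

lemma combine_field_ring:
  "ring.combine field_ring Ks Us = (\<Sum>i<min (length Ks) (length Us). Ks ! i * Us ! i)"
proof -
  interpret F: ring "field_ring :: 'a::field ring"
    by (rule field_ring_is_ring)
  show ?thesis
  proof (induction Ks arbitrary: Us)
    case (Cons k Ks)
    then show ?case
      by (cases Us) (simp_all del: sum.lessThan_Suc add: sum.lessThan_Suc_shift)
  qed simp
qed

lemma (in ring) independent_with_same_Span:
  assumes K: "subfield K R" and "set Us \<subseteq> carrier R"
  shows "\<exists>Vs. independent K Vs \<and> Span K Vs = Span K Us \<and> length Vs \<le> length Us"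
  using assms(2)
proof (induction Us)
  case (Cons u Us)
  then obtain Vs where Vs: "independent K Vs" "Span K Vs = Span K Us" "length Vs \<le> length Us"
    by auto
  show ?case
  proof (cases "u \<in> Span K Us")
    case True
    then have "Span K (u # Us) = Span K Us"
      using Span_base_incl[OF K] mono_Span_subset[OF K] Cons.prems
      by (metis insert_subset list.simps(15) subset_antisym)
    then show ?thesis
      using Vs by (metis le_SucI length_Cons)
  next
    case False
    then have "Span K (u # Vs) = Span K (u # Us)" and "independent K (u # Vs)"
      using li_Cons[of u K Vs] Cons.prems Vs by auto
    then show ?thesis
      using Vs by (metis Suc_le_mono length_Cons)
  qed
qed auto

lemma (in ring) independent_length_le_spanning_length:
  assumes K: "subfield K R" and "independent K Us" "set Us \<subseteq> Span K ws" "set ws \<subseteq> carrier R"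
  shows "length Us \<le> length ws"
proof -
  obtain Vs where "independent K Vs" "Span K Vs = Span K ws" "length Vs \<le> length ws"
    using independent_with_same_Span[OF K assms(4)] by auto
  then show ?thesis
    using independent_length_le[OF K assms(2)] assms(3) by fastforce
qed

lemma independent_map_field_ring:
  fixes K :: "'a::field set" and u :: "'b \<Rightarrow> 'a"
  assumes K: "is_subfield K" and bs: "distinct bs"
    and independent: "\<And>c. \<forall>b\<in>set bs. c b \<in> K \<Longrightarrow> (\<Sum>b\<in>set bs. c b * u b) = 0 \<Longrightarrow> \<forall>b\<in>set bs. c b = 0"
  shows "ring.independent field_ring K (map u bs)"
proof -
  interpret F: field "field_ring :: 'a ring"
    by (rule field_ring_is_field)
  have bij: "bij_betw ((!) bs) {..<length bs} (set bs)"
    using bs by (intro bij_betw_nth) auto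
  show ?thesis
  proof (rule F.trivial_combine_imp_independent[OF subfield_field_ring[OF K]])
    fix Ks assume Ks: "set Ks \<subseteq> K" and "F.combine Ks (map u bs) = \<zero>\<^bsub>field_ring\<^esub>"
    define idx where "idx = inv_into {..<length bs} ((!) bs)"
    have idx: "idx (bs ! i) = i" if "i < length bs" for i
      using bij that unfolding idx_def by (simp add: bij_betw_inv_into_left)
    define c where "c b = (if idx b < length Ks then Ks ! idx b else 0)" for b
    have "(\<Sum>b\<in>set bs. c b * u b) = (\<Sum>i<length bs. c (bs ! i) * u (bs ! i))"
      using sum.reindex_bij_betw[OF bij, of "\<lambda>b. c b * u b"] by simp
    also have "\<dots> = (\<Sum>i<min (length Ks) (length (map u bs)). Ks ! i * map u bs ! i)"
      unfolding c_def by (intro sum.mono_neutral_cong_right) (auto simp: idx)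
    also have "\<dots> = 0"
      using \<open>F.combine Ks (map u bs) = \<zero>\<^bsub>field_ring\<^esub>\<close> by (simp add: combine_field_ring)
    finally have "\<forall>b\<in>set bs. c b = 0"
      using Ks subfield_0[OF K] by (intro independent) (auto simp: c_def)
    then have "Ks ! i = 0" if "i < length Ks" "i < length bs" for i
      using that idx[of i] unfolding c_def by (metis nth_mem)
    then show "set (take (length (map u bs)) Ks) \<subseteq> {\<zero>\<^bsub>field_ring\<^esub>}"
      by (auto simp: set_conv_nth)
  qed simp
qed

lemma card_le_length_if_independent_in_Span:
  fixes K :: "'a::field set" and u :: "'b \<Rightarrow> 'a"
  assumes K: "is_subfield K" and "finite B"
    and independent: "\<And>c. \<forall>b\<in>B. c b \<in> K \<Longrightarrow> (\<Sum>b\<in>B. c b * u b) = 0 \<Longrightarrow> \<forall>b\<in>B. c b = 0"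
    and span: "u ` B \<subseteq> ring.Span field_ring K ws"
  shows "card B \<le> length ws"
proof -
  interpret F: field "field_ring :: 'a ring"
    by (rule field_ring_is_field)
  obtain bs where bs: "set bs = B" "distinct bs"
    using finite_distinct_list[OF \<open>finite B\<close>] by blast
  have "length (map u bs) \<le> length ws"
    using independent_map_field_ring[OF K bs(2)] independent span bs(1)
    by (intro F.independent_length_le_spanning_length[OF subfield_field_ring[OF K]]) auto
  then show ?thesis
    using bs distinct_card by fastforce
qed

definition monomials :: "'a::field set \<Rightarrow> nat \<Rightarrow> 'a set" where
  "monomials A T = (\<lambda>k. \<Prod>a\<in>A. a ^ k a) ` (A \<rightarrow>\<^sub>E {..T})"

inductive_set polys :: "'a::field set \<Rightarrow> 'a set \<Rightarrow> nat \<Rightarrow> 'a set" for K A T where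
  zero: "0 \<in> polys K A T"
| add_monomial: "c \<in> K \<Longrightarrow> m \<in> monomials A T \<Longrightarrow> P \<in> polys K A T \<Longrightarrow> c * m + P \<in> polys K A T"

definition rat_funs :: "'a::field set \<Rightarrow> 'a set \<Rightarrow> 'a set" where
  "rat_funs K A = {P / Q | P Q T. P \<in> polys K A T \<and> Q \<in> polys K A T \<and> Q \<noteq> 0}"

lemma monomials_mono: "T \<le> T' \<Longrightarrow> monomials A T \<subseteq> monomials A T'"
  unfolding monomials_def by (intro image_mono PiE_mono) auto

lemma monomials_mult:
  assumes "m \<in> monomials A T" "m' \<in> monomials A T'"
  shows "m * m' \<in> monomials A (T + T')"
proof -
  obtain k k' where k: "k \<in> A \<rightarrow>\<^sub>E {..T}" "m = (\<Prod>a\<in>A. a ^ k a)"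
    and k': "k' \<in> A \<rightarrow>\<^sub>E {..T'}" "m' = (\<Prod>a\<in>A. a ^ k' a)"
    using assms unfolding monomials_def by blast
  have "restrict (\<lambda>a. k a + k' a) A \<in> A \<rightarrow>\<^sub>E {..T + T'}"
    using k(1) k'(1) by (auto simp: PiE_iff add_mono)
  moreover have "m * m' = (\<Prod>a\<in>A. a ^ restrict (\<lambda>a. k a + k' a) A a)"
    unfolding k(2) k'(2) by (simp add: power_add prod.distrib)
  ultimately show ?thesis
    unfolding monomials_def by blast
qed

lemma one_in_monomials: "1 \<in> monomials A T"
proof -
  have "restrict (\<lambda>_. 0) A \<in> A \<rightarrow>\<^sub>E {..T}" "1 = (\<Prod>a\<in>A. a ^ restrict (\<lambda>_. 0) A a)"
    by auto
  then show ?thesis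
    unfolding monomials_def by blast
qed

lemma mem_monomials:
  assumes "finite A" "a \<in> A" "1 \<le> T"
  shows "a \<in> monomials A T"
proof -
  define k where "k = restrict (\<lambda>b. if b = a then 1 else 0::nat) A"
  have "k \<in> A \<rightarrow>\<^sub>E {..T}"
    unfolding k_def using assms(3) by auto
  moreover have "(\<Prod>b\<in>A. b ^ k b) = (\<Prod>b\<in>A. if b = a then b else 1)"
    unfolding k_def by (intro prod.cong) auto
  ultimately show ?thesis
    using assms(1,2) unfolding monomials_def by (auto intro!: image_eqI[of _ _ k])
qed

lemma finite_monomials: "finite A \<Longrightarrow> finite (monomials A T)"
  unfolding monomials_def by (intro finite_imageI finite_PiE) auto

lemma card_monomials_le: "finite A \<Longrightarrow> card (monomials A T) \<le> (T + 1) ^ card A"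
  unfolding monomials_def using card_image_le[of "A \<rightarrow>\<^sub>E {..T}"] by (simp add: card_PiE finite_PiE)

context
  fixes K :: "'a::field set"
  assumes K: "is_subfield K"
begin

lemma polys_mono: "P \<in> polys K A T \<Longrightarrow> T \<le> T' \<Longrightarrow> P \<in> polys K A T'"
  by (induction rule: polys.induct) (auto intro: polys.intros dest: monomials_mono)

lemma polys_add: "P \<in> polys K A T \<Longrightarrow> P' \<in> polys K A T \<Longrightarrow> P + P' \<in> polys K A T"
  by (induction rule: polys.induct) (auto simp: add.assoc intro: polys.intros)

lemma polys_smult: "P \<in> polys K A T \<Longrightarrow> c \<in> K \<Longrightarrow> c * P \<in> polys K A T"
proof (induction rule: polys.induct)
  case (add_monomial c' m P)
  then have "(c * c') * m + c * P \<in> polys K A T"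
    by (intro polys.intros) (auto simp: subfield_mult_closed[OF K])
  then show ?case
    by (simp add: algebra_simps)
qed (simp add: polys.zero)

lemma const_in_polys: "c \<in> K \<Longrightarrow> c \<in> polys K A T"
  using polys.add_monomial[OF _ one_in_monomials polys.zero] by fastforce

lemma mem_polys: "finite A \<Longrightarrow> a \<in> A \<Longrightarrow> 1 \<le> T \<Longrightarrow> a \<in> polys K A T"
  using polys.add_monomial[OF subfield_1[OF K] mem_monomials polys.zero] by fastforce

lemma polys_monomial_mult: "P \<in> polys K A T' \<Longrightarrow> m \<in> monomials A T \<Longrightarrow> m * P \<in> polys K A (T + T')"
proof (induction rule: polys.induct)
  case (add_monomial c m' P)
  then have "c * (m * m') + m * P \<in> polys K A (T + T')"
    by (intro polys.intros monomials_mult) auto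
  then show ?case
    by (simp add: algebra_simps)
qed (simp add: polys.zero)

lemma polys_mult: "P \<in> polys K A T \<Longrightarrow> P' \<in> polys K A T' \<Longrightarrow> P * P' \<in> polys K A (T + T')"
proof (induction rule: polys.induct)
  case (add_monomial c m P)
  have "c * (m * P') \<in> polys K A (T + T')"
    using add_monomial polys_smult polys_monomial_mult by blast
  then have "c * (m * P') + P * P' \<in> polys K A (T + T')"
    using add_monomial.IH add_monomial.prems by (intro polys_add)
  then show ?case
    by (simp add: algebra_simps)
qed (simp add: polys.zero)

lemma polys_power: "P \<in> polys K A T \<Longrightarrow> P ^ n \<in> polys K A (n * T)"
  by (induction n) (simp_all add: const_in_polys subfield_1[OF K] polys_mult)

lemma polys_prod: "(\<And>i. i < n \<Longrightarrow> f i \<in> polys K A T) \<Longrightarrow> (\<Prod>i<n. f i) \<in> polys K A (n * T)"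
proof (induction n)
  case (Suc n)
  then have "(\<Prod>i<n. f i) * f n \<in> polys K A (n * T + T)"
    by (intro polys_mult) auto
  then show ?case
    by (simp add: add.commute)
qed (simp add: const_in_polys subfield_1[OF K])

lemma polys_subset_Span:
  assumes "set ws = monomials A T"
  shows "polys K A T \<subseteq> ring.Span field_ring K ws"
proof
  interpret F: field "field_ring :: 'a ring"
    by (rule field_ring_is_field)
  have subfield: "subfield K field_ring"
    using K by (rule subfield_field_ring)
  fix y assume "y \<in> polys K A T"
  then show "y \<in> F.Span K ws"
  proof (induction rule: polys.induct)
    case (add_monomial c m P)
    then have "c \<otimes>\<^bsub>field_ring\<^esub> m \<in> F.Span K ws"
      using F.Span_base_incl[OF subfield, of ws] F.Span_smult_closed[OF subfield, of ws] assms by auto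
    then show ?case
      using F.Span_subgroup_props(3)[OF subfield, of ws] add_monomial.IH by simp
  qed (use F.Span_subgroup_props(2)[OF subfield, of ws] in simp)
qed

lemma rat_funsI: "P \<in> polys K A T \<Longrightarrow> Q \<in> polys K A T \<Longrightarrow> Q \<noteq> 0 \<Longrightarrow> P / Q \<in> rat_funs K A"
  unfolding rat_funs_def by blast

lemma is_subfield_rat_funs: "is_subfield (rat_funs K A)"
  unfolding is_subfield_def
proof (intro conjI ballI)
  have one: "1 \<in> polys K A 0"
    by (rule const_in_polys[OF subfield_1[OF K]])
  show "0 \<in> rat_funs K A" "1 \<in> rat_funs K A"
    using rat_funsI[OF polys.zero one] rat_funsI[OF one one] by simp_all
  fix x assume "x \<in> rat_funs K A"
  then obtain P Q T where x: "P \<in> polys K A T" "Q \<in> polys K A T" "Q \<noteq> 0" "x = P / Q"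
    unfolding rat_funs_def by blast
  have "- P \<in> polys K A T"
    using polys_smult[OF x(1) subfield_uminus_closed[OF K subfield_1[OF K]]] by simp
  then show "- x \<in> rat_funs K A"
    using rat_funsI[OF _ x(2,3), of "- P"] x(4) by simp
  show "inverse x \<in> rat_funs K A"
  proof (cases "P = 0")
    case True
    then show ?thesis
      using \<open>0 \<in> rat_funs K A\<close> x(4) by simp
  next
    case False
    then show ?thesis
      using rat_funsI[OF x(2,1) False] x(4) by simp
  qed
  fix y assume "y \<in> rat_funs K A"
  then obtain P' Q' T' where y: "P' \<in> polys K A T'" "Q' \<in> polys K A T'" "Q' \<noteq> 0" "y = P' / Q'"
    unfolding rat_funs_def by blast
  define S where "S = T + T'"
  have "P \<in> polys K A S" "Q \<in> polys K A S" "P' \<in> polys K A S" "Q' \<in> polys K A S"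
    using x y polys_mono[of _ A T S] polys_mono[of _ A T' S] unfolding S_def by auto
  then have "P * Q' + P' * Q \<in> polys K A (S + S)" "P * P' \<in> polys K A (S + S)"
    "Q * Q' \<in> polys K A (S + S)"
    by (blast intro: polys_add polys_mult)+
  moreover have "x + y = (P * Q' + P' * Q) / (Q * Q')" "x * y = (P * P') / (Q * Q')"
    unfolding x(4) y(4) using x(3) y(3) by (simp_all add: add_frac_eq)
  ultimately show "x + y \<in> rat_funs K A" "x * y \<in> rat_funs K A"
    using rat_funsI x(3) y(3) by simp_all
qed

lemma gen_subfield_subset_rat_funs:
  assumes "finite A"
  shows "gen_subfield (K \<union> A) \<subseteq> rat_funs K A"
proof (rule gen_subfield_least[OF is_subfield_rat_funs])
  have one: "1 \<in> polys K A 1"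
    by (rule const_in_polys[OF subfield_1[OF K]])
  show "K \<union> A \<subseteq> rat_funs K A"
    using rat_funsI[OF const_in_polys one] rat_funsI[OF mem_polys[OF assms] one] by fastforce
qed

lemma common_denominator:
  fixes x :: "nat \<Rightarrow> 'a"
  assumes "\<forall>i<l. x i \<in> rat_funs K A"
  obtains T Q P where "Q \<in> polys K A T" "Q \<noteq> 0" "\<forall>i<l. P i \<in> polys K A T \<and> x i = P i / Q"
proof -
  have "\<exists>T Q P. Q \<in> polys K A T \<and> Q \<noteq> 0 \<and> (\<forall>i<l. P i \<in> polys K A T \<and> x i = P i / Q)"
    using assms
  proof (induction l)
    case 0
    then show ?case
      using const_in_polys[OF subfield_1[OF K]] by fastforce
  next
    case (Suc l)
    then obtain T Q P where Q: "Q \<in> polys K A T" "Q \<noteq> 0"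
      and P: "\<forall>i<l. P i \<in> polys K A T \<and> x i = P i / Q"
      by auto
    obtain T' P' Q' where P'Q': "P' \<in> polys K A T'" "Q' \<in> polys K A T'" "Q' \<noteq> 0" "x l = P' / Q'"
      using Suc.prems unfolding rat_funs_def by blast
    define S where "S = T + T'"
    have "Q \<in> polys K A S" "P' \<in> polys K A S" "Q' \<in> polys K A S" "\<forall>i<l. P i \<in> polys K A S"
      using Q P P'Q' polys_mono[of _ A T S] polys_mono[of _ A T' S] unfolding S_def by auto
    then have "Q * Q' \<in> polys K A (S + S)"
      and "\<forall>i<Suc l. (if i < l then P i * Q' else P' * Q) \<in> polys K A (S + S)"
      by (auto intro: polys_mult simp: less_Suc_eq)
    moreover have "\<forall>i<Suc l. x i = (if i < l then P i * Q' else P' * Q) / (Q * Q')"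
      using P P'Q' Q(2) by (auto simp: less_Suc_eq)
    ultimately show ?case
      using Q(2) P'Q'(3)
      by (intro exI[of _ "S + S"] exI[of _ "Q * Q'"] exI[of _ "\<lambda>i. if i < l then P i * Q' else P' * Q"])
        auto
  qed
  then show thesis
    by (elim exE conjE) (rule that; assumption)
qed

end

section \<open>At most |A| variables with the Gauss norm in K(A)\<close>

lemma monomial_times_denominator_in_polys:
  fixes x P :: "nat \<Rightarrow> 'a::field"
  assumes K: "is_subfield K" and Q: "Q \<in> polys K A T" "Q \<noteq> 0"
    and P: "\<forall>i<l. P i \<in> polys K A T \<and> x i = P i / Q" and k: "\<forall>i<l. k i \<le> N"
  shows "(\<Prod>i<l. x i ^ k i) * Q ^ (l * N) \<in> polys K A (l * (N * T))"
proof -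
  have "(\<Prod>i<l. x i ^ k i) * Q ^ (l * N) = (\<Prod>i<l. x i ^ k i * Q ^ N)"
    by (simp add: prod.distrib power_mult mult.commute[of l N])
  also have "\<dots> = (\<Prod>i<l. P i ^ k i * Q ^ (N - k i))"
  proof (rule prod.cong)
    fix i assume "i \<in> {..<l}"
    then have "Q ^ N = Q ^ k i * Q ^ (N - k i)"
      using k by (simp flip: power_add)
    then show "x i ^ k i * Q ^ N = P i ^ k i * Q ^ (N - k i)"
      using P \<open>i \<in> {..<l}\<close> Q(2) by (simp add: power_divide)
  qed simp
  also have "\<dots> \<in> polys K A (l * (N * T))"
  proof (rule polys_prod[OF K])
    fix i assume "i < l"
    then have "P i ^ k i * Q ^ (N - k i) \<in> polys K A (k i * T + (N - k i) * T)"
      using P Q by (intro polys_mult[OF K] polys_power[OF K]) auto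
    moreover have "k i * T + (N - k i) * T = N * T"
      using k \<open>i < l\<close> by (simp flip: add_mult_distrib)
    ultimately show "P i ^ k i * Q ^ (N - k i) \<in> polys K A (N * T)"
      by simp
  qed
  finally show ?thesis .
qed

lemma box_count_exceeds_monomial_count:
  fixes l d T :: nat
  assumes "d < l"
  defines "N \<equiv> (l * T + 1) ^ d"
  shows "(l * (N * T) + 1) ^ d < (N + 1) ^ l"
proof -
  have "(l * (N * T) + 1) ^ d \<le> ((l * T + 1) * (N + 1)) ^ d"
    by (intro power_mono) (simp_all add: algebra_simps)
  also have "\<dots> = N * (N + 1) ^ d"
    by (simp only: N_def power_mult_distrib)
  also have "\<dots> < (N + 1) ^ Suc d"
    by simp
  also have "\<dots> \<le> (N + 1) ^ l"
    using assms(1) by (intro power_increasing) auto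
  finally show ?thesis .
qed

lemma (in nonarch_valued) gauss_norm_cond_independent:
  assumes g: "gauss_norm_cond p v K l r x" and r: "\<forall>i<l. 0 < r i"
    and E: "finite E" "\<forall>e\<in>E. admissible_exp p l e" and c: "\<forall>e\<in>E. c e \<in> K"
    and zero: "(\<Sum>e\<in>E. c e * Defs.mon p l x e) = 0"
  shows "\<forall>e\<in>E. c e = 0"
proof (cases "E = {}")
  case False
  have "v (\<Sum>e\<in>E. c e * Defs.mon p l x e) = Max ((\<lambda>e. v (c e) * gauss_weight l r e) ` E)"
    by (rule gauss_norm_condD[OF g E(1) False]) (use E(2) c in auto)
  then have "Max ((\<lambda>e. v (c e) * gauss_weight l r e) ` E) = 0"
    using zero by simp
  show ?thesis
  proof
    fix e assume "e \<in> E"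
    then have "v (c e) * gauss_weight l r e \<le> Max ((\<lambda>e. v (c e) * gauss_weight l r e) ` E)"
      using E(1) by simp
    moreover have "0 < gauss_weight l r e"
      using r by (intro gauss_weight_pos) auto
    ultimately have "v (c e) \<le> 0"
      using \<open>Max _ = 0\<close> by (simp add: mult_le_0_iff)
    then show "c e = 0"
      using v_nonneg[of "c e"] by simp
  qed
qed simp

definition nat_exponent :: "nat \<Rightarrow> (nat \<Rightarrow> nat) \<Rightarrow> nat \<Rightarrow> rat" where
  "nat_exponent l k = (\<lambda>i. if i < l then of_nat (k i) else 0)"

lemma admissible_nat_exponent: "admissible_exp p l (nat_exponent l k)"
  unfolding admissible_exp_def nat_exponent_def by (auto intro: exI[of _ 0])

lemma inj_on_nat_exponent: "inj_on (nat_exponent l) ({..<l} \<rightarrow>\<^sub>E X)"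
proof (rule inj_onI)
  fix k k' assume "k \<in> {..<l} \<rightarrow>\<^sub>E X" "k' \<in> {..<l} \<rightarrow>\<^sub>E X" and eq: "nat_exponent l k = nat_exponent l k'"
  show "k = k'"
  proof (rule PiE_ext)
    fix i assume "i \<in> {..<l}"
    then show "k i = k' i"
      using fun_cong[OF eq, of i] by (simp add: nat_exponent_def)
  qed fact+
qed

lemma (in char_p_valued) mon_nat_exponent:
  "Defs.mon p l x (nat_exponent l k) = (\<Prod>i<l. x i ^ k i)" for x :: "nat \<Rightarrow> 'l"
  unfolding Defs.mon_def root_pow_eq_frac_pow nat_exponent_def
  by (intro prod.cong refl) (simp add: frac_pow_of_nat)

context char_p_valued
begin

text \<open>The (N + 1)^l monomials x^k with all k_i \<le> N, times Q^(l N), are independent by the Gauss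
  norm formula but lie in the span of at most (l N T + 1)^|A| monomials in A.\<close>

lemma gauss_norm_cond_length_le_card:
  assumes K: "is_subfield K" and A: "finite A" and x: "\<forall>i<l. x i \<in> gen_subfield (K \<union> A)"
    and g: "gauss_norm_cond p v K l r x" and r: "\<forall>i<l. 0 < r i"
  shows "l \<le> card A"
proof (rule ccontr)
  assume "\<not> l \<le> card A"
  have "\<forall>i<l. x i \<in> rat_funs K A"
    using x gen_subfield_subset_rat_funs[OF K A] by auto
  then obtain T Q P where Q: "Q \<in> polys K A T" "Q \<noteq> 0" and P: "\<forall>i<l. P i \<in> polys K A T \<and> x i = P i / Q"
    by (rule common_denominator[OF K])
  define N where "N = (l * T + 1) ^ card A"
  define E where "E = nat_exponent l ` ({..<l} \<rightarrow>\<^sub>E {..N})"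
  define u where "u e = Defs.mon p l x e * Q ^ (l * N)" for e
  obtain ws where ws: "set ws = monomials A (l * (N * T))" "distinct ws"
    using finite_distinct_list[OF finite_monomials[OF A]] by blast
  have "card E \<le> length ws"
  proof (rule card_le_length_if_independent_in_Span[OF K])
    show "finite E"
      unfolding E_def by (simp add: finite_PiE)
    have "u e \<in> polys K A (l * (N * T))" if "e \<in> E" for e
      using that monomial_times_denominator_in_polys[OF K Q P]
      unfolding E_def u_def by (auto simp: mon_nat_exponent PiE_iff)
    then show "u ` E \<subseteq> ring.Span field_ring K ws"
      using polys_subset_Span[OF K ws(1)] by blast
    fix c assume "\<forall>e\<in>E. c e \<in> K" "(\<Sum>e\<in>E. c e * u e) = 0"
    moreover have "(\<Sum>e\<in>E. c e * u e) = (\<Sum>e\<in>E. c e * Defs.mon p l x e) * Q ^ (l * N)"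
      unfolding u_def by (simp add: sum_distrib_right mult.assoc)
    ultimately show "\<forall>e\<in>E. c e = 0"
      using Q(2) admissible_nat_exponent unfolding E_def
      by (intro gauss_norm_cond_independent[OF g r]) (auto simp: finite_PiE)
  qed
  moreover have "card E = (N + 1) ^ l"
    unfolding E_def using inj_on_nat_exponent by (simp add: card_image card_PiE)
  moreover have "length ws \<le> (l * (N * T) + 1) ^ card A"
    using ws card_monomials_le[OF A] distinct_card by metis
  ultimately show False
    using box_count_exceeds_monomial_count[of "card A" l T] \<open>\<not> l \<le> card A\<close>
    unfolding N_def by simp
qed

end

section \<open>Maximal Gauss families and semi-immediacy\<close>

definition gauss_family ::
  "nat \<Rightarrow> ('a::field \<Rightarrow> real) \<Rightarrow> 'a set \<Rightarrow> 'a set \<Rightarrow> nat \<Rightarrow> (nat \<Rightarrow> real) \<Rightarrow> (nat \<Rightarrow> 'a) \<Rightarrow> bool"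
where
  "gauss_family p v K F l r x \<longleftrightarrow>
     (\<forall>i<l. 0 < r i) \<and> (\<forall>i<l. x i \<in> F) \<and> has_p_roots p l x \<and> gauss_norm_cond p v K l r x"

lemma value_torsion_of_value_power:
  assumes "0 < m" "v f = v y ^ m" "value_torsion v S f"
  shows "value_torsion v S y"
proof -
  obtain n z where "0 < n" "z \<in> S" "z \<noteq> 0" "v f ^ n = v z"
    using assms(3) unfolding value_torsion_def by blast
  then show ?thesis
    unfolding value_torsion_def using assms(1,2)
    by (intro exI[of _ "m * n"]) (auto simp: power_mult)
qed

context nonarch_valued
begin

lemma residue_algebraic_if_v_less_1: "0 \<in> S \<Longrightarrow> v y < 1 \<Longrightarrow> residue_algebraic v S y"
  unfolding residue_algebraic_def by (rule exI[of _ 1]) (auto intro!: exI[of _ "\<lambda>_. 0"])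

text \<open>A monic relation for z^P is one for z with all exponents multiplied by P.\<close>

lemma residue_algebraic_of_power:
  assumes "0 \<in> S" "0 < P" "residue_algebraic v S (z ^ P)"
  shows "residue_algebraic v S z"
proof -
  obtain m a where "0 < m" and a: "\<forall>j<m. a j \<in> S \<and> v (a j) \<le> 1"
    and less: "v ((z ^ P) ^ m + (\<Sum>j<m. a j * (z ^ P) ^ j)) < 1"
    using assms(3) unfolding residue_algebraic_def by blast
  define b where "b j = (if P dvd j then a (j div P) else 0)" for j
  have "(\<Sum>j<P * m. b j * z ^ j) = (\<Sum>j\<in>(\<lambda>i. P * i) ` {..<m}. b j * z ^ j)"
    unfolding b_def using \<open>0 < P\<close> by (intro sum.mono_neutral_right) (auto elim!: dvdE)
  also have "\<dots> = (\<Sum>i<m. a i * (z ^ P) ^ i)"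
    using \<open>0 < P\<close> by (simp add: sum.reindex inj_on_def b_def power_mult)
  finally have "v (z ^ (P * m) + (\<Sum>j<P * m. b j * z ^ j)) < 1"
    using less by (simp add: power_mult)
  moreover have "\<forall>j<P * m. b j \<in> S \<and> v (b j) \<le> 1"
    using a assms(1) \<open>0 < P\<close> by (auto simp: b_def less_mult_imp_div_less mult.commute)
  ultimately show ?thesis
    unfolding residue_algebraic_def using \<open>0 < P\<close> \<open>0 < m\<close> by (intro exI[of _ "P * m"]) auto
qed

lemma residue_algebraic_perturb:
  assumes y: "v y \<le> 1" and z: "v z \<le> 1" and yz: "v (y - z) < 1" and "residue_algebraic v S z"
  shows "residue_algebraic v S y"
proof -
  obtain n a where "0 < n" and a: "\<forall>j<n. a j \<in> S \<and> v (a j) \<le> 1"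
    and less: "v (z ^ n + (\<Sum>j<n. a j * z ^ j)) < 1"
    using assms(4) unfolding residue_algebraic_def by blast
  have "v (a j * (y ^ j - z ^ j)) < 1" if "j < n" for j
  proof -
    have "v (a j) * v (y ^ j - z ^ j) \<le> v (y ^ j - z ^ j)"
      using a that v_nonneg by (intro mult_left_le_one_le) auto
    then show ?thesis
      using v_power_diff_less[OF y z yz, of j] by simp
  qed
  then have diff: "v ((y ^ n - z ^ n) + (\<Sum>j<n. a j * (y ^ j - z ^ j))) < 1"
    using v_power_diff_less[OF y z yz, of n] by (intro v_add_less v_sum_less) auto
  have split: "y ^ n + (\<Sum>j<n. a j * y ^ j)
      = (z ^ n + (\<Sum>j<n. a j * z ^ j)) + ((y ^ n - z ^ n) + (\<Sum>j<n. a j * (y ^ j - z ^ j)))"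
    by (simp add: algebra_simps sum_subtractf)
  have "v (y ^ n + (\<Sum>j<n. a j * y ^ j)) < 1"
    unfolding split by (rule v_add_less[OF less diff])
  then show ?thesis
    unfolding residue_algebraic_def using \<open>0 < n\<close> a by blast
qed

end

context char_p_valued
begin

lemma gauss_family_Suc:
  assumes fam: "gauss_family p v K F l r x" and "f \<in> F" "f \<noteq> 0"
    and roots: "\<forall>k. \<exists>y. y ^ (p ^ k) = f" and gauss: "gauss_transcendental v (perf_adjoin p K l x) f"
  shows "gauss_family p v K F (Suc l) (r(l := v f)) (x(l := f))"
  using fam gauss_norm_cond_Suc[OF _ \<open>f \<noteq> 0\<close> roots gauss] v_pos[OF \<open>f \<noteq> 0\<close>] \<open>f \<in> F\<close> roots
  unfolding gauss_family_def has_p_roots_def by (auto simp: less_Suc_eq)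

lemma exists_maximal_gauss_family:
  assumes K: "is_subfield K" and A: "finite A"
  obtains l r x where "gauss_family p v K (gen_subfield (K \<union> A)) l r x"
    and "\<And>r' x'. \<not> gauss_family p v K (gen_subfield (K \<union> A)) (Suc l) r' x'"
proof -
  define lengths where "lengths = {l. \<exists>r x. gauss_family p v K (gen_subfield (K \<union> A)) l r x}"
  have "lengths \<subseteq> {..card A}"
    using gauss_norm_cond_length_le_card[OF K A] unfolding lengths_def gauss_family_def by auto
  then have "finite lengths"
    by (rule finite_subset) simp
  moreover have "0 \<in> lengths"
    unfolding lengths_def gauss_family_def has_p_roots_def by (blast intro: gauss_norm_cond_0)
  ultimately have "Max lengths \<in> lengths"
    by (intro Max_in) auto
  moreover have "Suc (Max lengths) \<notin> lengths"
    using Max_ge[OF \<open>finite lengths\<close>, of "Suc (Max lengths)"] by auto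
  ultimately show ?thesis
    using that unfolding lengths_def by blast
qed

context
  fixes S F :: "'l set"
  assumes S: "is_subfield S"
    and approx: "\<And>y e. 0 < e \<Longrightarrow> \<exists>z n. v (y - z) < e \<and> z ^ (p ^ n) \<in> F"
    and no_gauss: "\<And>f. f \<in> F \<Longrightarrow> f \<noteq> 0 \<Longrightarrow> \<not> gauss_transcendental v S f"
begin

lemma value_torsion_if_no_gauss_transcendental:
  assumes "y \<noteq> 0"
  shows "value_torsion v S y"
proof -
  obtain z n where z: "v (y - z) < v y" "z ^ (p ^ n) \<in> F"
    using approx v_pos[OF assms] by blast
  then have "v z = v y"
    by (intro v_eq_if_v_diff_less)
  then have "z ^ (p ^ n) \<noteq> 0"
    using assms by auto
  then have "value_torsion v S (z ^ (p ^ n))"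
    using gauss_transcendental_if_not_value_torsion[OF S] no_gauss[OF z(2)] by blast
  then show ?thesis
    using value_torsion_of_value_power[of "p ^ n" v "z ^ (p ^ n)" y S] \<open>v z = v y\<close> p_pos by simp
qed

lemma residue_algebraic_if_no_gauss_transcendental:
  assumes "v y \<le> 1"
  shows "residue_algebraic v S y"
proof (cases "v y < 1")
  case True
  then show ?thesis
    by (rule residue_algebraic_if_v_less_1[OF subfield_0[OF S]])
next
  case False
  obtain z n where z: "v (y - z) < 1" "z ^ (p ^ n) \<in> F"
    using approx[of 1 y] by auto
  then have "v z = 1"
    using v_eq_if_v_diff_less[of y z] assms False by simp
  then have "z ^ (p ^ n) \<noteq> 0" "v (z ^ (p ^ n)) = 1"
    by auto
  then have "residue_algebraic v S (z ^ (p ^ n))"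
    using gauss_transcendental_if_not_residue_algebraic[OF S] no_gauss[OF z(2)] by blast
  moreover have "0 < p ^ n"
    using p_pos by simp
  ultimately have "residue_algebraic v S z"
    using residue_algebraic_of_power[OF subfield_0[OF S]] by blast
  then show ?thesis
    using residue_algebraic_perturb[OF assms _ z(1)] \<open>v z = 1\<close> by simp
qed

lemma semi_immediate_if_no_gauss_transcendental: "semi_immediate v S"
  unfolding semi_immediate_iff
  using value_torsion_if_no_gauss_transcendental residue_algebraic_if_no_gauss_transcendental by blast

end

end

lemma p_power_roots_if_closed_under_p_roots:
  fixes E :: "'a::monoid_mult set"
  assumes "\<forall>y\<in>E. \<exists>z\<in>E. z ^ p = y" "y \<in> E"
  shows "\<exists>z\<in>E. z ^ (p ^ k) = y"
proof (induction k)
  case (Suc k)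
  then obtain z w where "z ^ (p ^ k) = y" "w \<in> E" "w ^ p = z"
    using assms(1) by blast
  moreover have "w ^ (p ^ Suc k) = (w ^ p) ^ (p ^ k)"
    by (simp add: mult.commute flip: power_mult)
  ultimately show ?case
    by auto
qed (use assms(2) in auto)

lemma perf_top_fin_genE:
  assumes "perf_top_fin_gen p v K"
  obtains A where "finite A"
    and "\<And>f. f \<in> gen_subfield (K \<union> A) \<Longrightarrow> \<forall>k. \<exists>y. y ^ (p ^ k) = f"
    and "\<And>y e. 0 < e \<Longrightarrow> \<exists>z n. v (y - z) < e \<and> z ^ (p ^ n) \<in> gen_subfield (K \<union> A)"
proof -
  obtain A where "finite A"
    and perfect: "\<forall>y\<in>{y. \<exists>n. y ^ (p ^ n) \<in> gen_subfield (K \<union> A)}.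
        \<exists>z\<in>{y. \<exists>n. y ^ (p ^ n) \<in> gen_subfield (K \<union> A)}. z ^ p = y"
    and dense: "v_closure v {y. \<exists>n. y ^ (p ^ n) \<in> gen_subfield (K \<union> A)} = UNIV"
    using assms unfolding perf_top_fin_gen_def Let_def by blast
  have "\<forall>k. \<exists>y. y ^ (p ^ k) = f" if "f \<in> gen_subfield (K \<union> A)" for f
  proof
    fix k
    have "f \<in> {y. \<exists>n. y ^ (p ^ n) \<in> gen_subfield (K \<union> A)}"
      using that by (auto intro: exI[of _ 0])
    then show "\<exists>y. y ^ (p ^ k) = f"
      using p_power_roots_if_closed_under_p_roots[OF perfect, of f k] by blast
  qed
  moreover have "\<exists>z n. v (y - z) < e \<and> z ^ (p ^ n) \<in> gen_subfield (K \<union> A)" if "0 < e" for y e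
    using dense that unfolding v_closure_def by blast
  ultimately show ?thesis
    using that \<open>finite A\<close> by blast
qed

theorem corollary3p9:
  fixes v :: "'l::field \<Rightarrow> real" and K :: "'l set" and p :: nat
  assumes "prime p"
    and "of_nat p = (0::'l)"
    and "nonarch_abs v"
    and "nonarch_field_in v UNIV"
    and "nonarch_field_in v K"
    and "perf_top_fin_gen p v K"
  shows "\<exists>l r M. is_Kperfd p v K l r M \<and> semi_immediate v M"
proof -
  interpret char_p_valued v p
    using assms(1-3) by unfold_locales
  have K: "is_subfield K"
    using assms(5) unfolding nonarch_field_in_def by blast
  obtain A where A: "finite A"
    and roots: "\<And>f. f \<in> gen_subfield (K \<union> A) \<Longrightarrow> \<forall>k. \<exists>y. y ^ (p ^ k) = f"
    and approx: "\<And>y e. 0 < e \<Longrightarrow> \<exists>z n. v (y - z) < e \<and> z ^ (p ^ n) \<in> gen_subfield (K \<union> A)"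
    using perf_top_fin_genE[OF assms(6)] by blast
  obtain l r x where family: "gauss_family p v K (gen_subfield (K \<union> A)) l r x"
    and maximal: "\<And>r' x'. \<not> gauss_family p v K (gen_subfield (K \<union> A)) (Suc l) r' x'"
    using exists_maximal_gauss_family[OF K A] by blast
  let ?S = "perf_adjoin p K l x"
  have "\<not> gauss_transcendental v ?S f" if "f \<in> gen_subfield (K \<union> A)" "f \<noteq> 0" for f
    using gauss_family_Suc[OF family that roots[OF that(1)]] maximal by blast
  then have "semi_immediate v ?S"
    by (intro semi_immediate_if_no_gauss_transcendental[OF is_subfield_perf_adjoin approx]) auto
  then have "semi_immediate v (v_closure v ?S)"
    by (rule semi_immediate_mono[OF subset_v_closure])
  moreover have "is_Kperfd p v K l r (v_closure v ?S)"
    using family unfolding is_Kperfd_def gauss_family_def perf_adjoin_def by blast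
  ultimately show ?thesis
    by blast
qed

end
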